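(* Let $\alpha$ be a unit speed Frenet curve in $\mathbb{E}^3$ and $\beta$ an osculating mate of $\alpha$. Then: (i) $\alpha$ is a plane curve if and only if $\beta$ is a plane curve; (ii) $\alpha$ is a general helix if and only if $\beta$ is a slant helix.
   Context: $\alpha:I\to\mathbb{E}^3$ is parametrized by arclength $s$, with Frenet frame $\{T,N,B\}$, curvature $\kappa>0$, torsion $\tau$. An osculating mate of $\alpha$ is a curve $\beta(s)=\int(x_1T+x_2N)ds$ with smooth $x_1,x_2$, $x_1^2+x_2^2=1$ and $\beta''\perp\mathrm{span}\{T,N\}$; $\beta$ is assumed to be a Frenet curve, unit speed in $s$, with curvature $\bar\kappa$ and torsion $\bar\tau$. A general helix is a curve whose tangent makes a constant angle with a fixed direction, equivalently $\tau/\kappa$ is constant. A slant helix is a curve whose principal normal makes a constant angle with a fixed direction, equivalently $\sigma=\frac{\kappa^2}{(\kappa^2+\tau^2)^{3/2}}\left(\frac{\tau}{\kappa}\right)'$ is constant (computed with the curve's own curvature and torsion). *)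

theory Defs
  imports "HOL-Analysis.Analysis"
begin

definition frenet_curve ::
  "real set \<Rightarrow> (real \<Rightarrow> real^3) \<Rightarrow> (real \<Rightarrow> real^3) \<Rightarrow> (real \<Rightarrow> real^3) \<Rightarrow>
   (real \<Rightarrow> real^3) \<Rightarrow> (real \<Rightarrow> real) \<Rightarrow> (real \<Rightarrow> real) \<Rightarrow> bool" where
  "frenet_curve I \<alpha> T N B \<kappa> \<tau> \<longleftrightarrow>
     open I \<and> is_interval I \<and> I \<noteq> {} \<and>
     (\<forall>s\<in>I.
        (\<alpha> has_vector_derivative T s) (at s) \<and>
        (T has_vector_derivative (\<kappa> s *\<^sub>R N s)) (at s) \<and>
        (N has_vector_derivative (- \<kappa> s *\<^sub>R T s + \<tau> s *\<^sub>R B s)) (at s) \<and>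
        (B has_vector_derivative (- \<tau> s *\<^sub>R N s)) (at s) \<and>
        norm (T s) = 1 \<and> norm (N s) = 1 \<and> inner (T s) (N s) = 0 \<and>
        B s = cross3 (T s) (N s) \<and> \<kappa> s > 0)"

definition plane_curve :: "real set \<Rightarrow> (real \<Rightarrow> real^3) \<Rightarrow> bool" where
  "plane_curve I \<alpha> \<longleftrightarrow> (\<exists>p n. n \<noteq> 0 \<and> (\<forall>s\<in>I. inner (\<alpha> s - p) n = 0))"

text \<open>A unit vector field along the curve makes a constant angle with a fixed
  direction u (for unit vectors the angle is arccos of the inner product).\<close>
definition const_angle_fixed_dir :: "real set \<Rightarrow> (real \<Rightarrow> real^3) \<Rightarrow> bool" where
  "const_angle_fixed_dir I V \<longleftrightarrow>
     (\<exists>u c. norm u = 1 \<and> (\<forall>s\<in>I. inner (V s) u = c))"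

definition general_helix :: "real set \<Rightarrow> (real \<Rightarrow> real^3) \<Rightarrow> bool" where
  "general_helix I T \<longleftrightarrow> const_angle_fixed_dir I T"

definition slant_helix :: "real set \<Rightarrow> (real \<Rightarrow> real^3) \<Rightarrow> bool" where
  "slant_helix I N \<longleftrightarrow> const_angle_fixed_dir I N"

end

theory Submission
  imports Defs
begin

(* Differentiating beta' = x1 T + x2 N with the Frenet equations of alpha gives
   beta'' = (x1' - kappa x2) T + (x2' + kappa x1) N + x2 tau B, and since beta'' is orthogonal
   to the osculating plane of alpha, kappab Nb = x2 tau B. As kappab > 0, the torsion tau never
   vanishes and Nb = e B for a sign e, constant by continuity.
   A Frenet curve with nonvanishing torsion is not planar, and a plane containing beta would be
   orthogonal to Nb = e B, which again forces its normal to vanish; so in (i) both sides are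
   false. For (ii): since (T.u)' = kappa (N.u) and (B.u)' = - tau (N.u), along alpha the
   tangent makes a constant angle with u iff N is orthogonal to u iff the binormal
   B = e Nb makes a constant angle with u. *)

lemma has_real_derivative_inner_const:
  "(f has_vector_derivative f') (at s) \<Longrightarrow> ((\<lambda>t. f t \<bullet> u) has_real_derivative f' \<bullet> u) (at s)"
  using bounded_linear.has_vector_derivative[OF bounded_linear_inner_left, of f f' "at s" u]
  by (simp add: has_real_derivative_iff_has_vector_derivative)

lemma has_real_derivative_zero_if_constant_on_open:
  assumes "open S" "s \<in> S" "(f has_real_derivative d) (at s)" "\<forall>t\<in>S. f t = c"
  shows "d = 0"
proof -
  have "(f has_real_derivative 0) (at s)"
    by (rule has_field_derivative_transform_within_open[of "\<lambda>_. c", OF _ assms(1,2)])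
       (use assms(4) in auto)
  then show ?thesis
    using assms(3) DERIV_unique by blast
qed

lemma constant_on_interval_iff_derivative_factor_zero:
  fixes f g h :: "real \<Rightarrow> real"
  assumes "open S" "is_interval S"
    and deriv: "\<And>s. s \<in> S \<Longrightarrow> (f has_real_derivative g s * h s) (at s)"
    and "\<And>s. s \<in> S \<Longrightarrow> g s \<noteq> 0"
  shows "(\<exists>c. \<forall>s\<in>S. f s = c) \<longleftrightarrow> (\<forall>s\<in>S. h s = 0)"
proof
  assume "\<exists>c. \<forall>s\<in>S. f s = c"
  then obtain c where "\<forall>s\<in>S. f s = c" by blast
  then have "g s * h s = 0" if "s \<in> S" for s
    using has_real_derivative_zero_if_constant_on_open[OF \<open>open S\<close> that deriv[OF that]] by blast
  then show "\<forall>s\<in>S. h s = 0"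
    using assms(4) by simp
next
  assume "\<forall>s\<in>S. h s = 0"
  then have "(f has_field_derivative 0) (at s within S)" if "s \<in> S" for s
    using deriv[OF that] that by (simp add: has_field_derivative_at_within)
  then show "\<exists>c. \<forall>s\<in>S. f s = c"
    using has_field_derivative_zero_constant is_interval_convex[OF \<open>is_interval S\<close>] by blast
qed

lemma continuous_on_unit_valued_constant:
  fixes f :: "'a::topological_space \<Rightarrow> real"
  assumes "connected S" "S \<noteq> {}" "continuous_on S f" "\<And>x. x \<in> S \<Longrightarrow> \<bar>f x\<bar> = 1"
  obtains c where "\<bar>c\<bar> = 1" "\<And>x. x \<in> S \<Longrightarrow> f x = c"
proof -
  have "f ` S \<subseteq> {-1, 1}"
    using assms(4) by (force simp: abs_if split: if_splits)
  then have "f constant_on S"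
    using continuous_finite_range_constant[OF assms(1,3)] finite_subset by blast
  then obtain c where "\<And>x. x \<in> S \<Longrightarrow> f x = c"
    by (auto simp: constant_on_def)
  with assms(2,4) that show ?thesis by blast
qed

lemma const_angle_fixed_dir_scaleR:
  assumes "c \<noteq> 0" "\<And>s. s \<in> I \<Longrightarrow> W s = c *\<^sub>R V s"
  shows "const_angle_fixed_dir I W \<longleftrightarrow> const_angle_fixed_dir I V"
proof
  assume "const_angle_fixed_dir I W"
  then obtain u d where "norm u = 1" "\<forall>s\<in>I. W s \<bullet> u = d"
    unfolding const_angle_fixed_dir_def by blast
  then have "\<forall>s\<in>I. V s \<bullet> u = d / c"
    using assms by (auto simp: field_simps)
  with \<open>norm u = 1\<close> show "const_angle_fixed_dir I V"
    unfolding const_angle_fixed_dir_def by blast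
next
  assume "const_angle_fixed_dir I V"
  then obtain u d where "norm u = 1" "\<forall>s\<in>I. V s \<bullet> u = d"
    unfolding const_angle_fixed_dir_def by blast
  then have "\<forall>s\<in>I. W s \<bullet> u = c * d"
    using assms by simp
  with \<open>norm u = 1\<close> show "const_angle_fixed_dir I W"
    unfolding const_angle_fixed_dir_def by blast
qed

lemma norm_cross3_orthonormal:
  fixes T N :: "real^3"
  assumes "norm T = 1" "norm N = 1" "T \<bullet> N = 0"
  shows "norm (cross3 T N) = 1"
proof -
  have "(norm (cross3 T N))\<^sup>2 = 1"
    using norm_cross_dot[of T N] assms by simp
  then show ?thesis
    using norm_ge_zero[of "cross3 T N"] by (auto simp: power2_eq_1_iff)
qed

lemma orthonormal_cross3_frame_orthogonal_eq_zero:
  fixes T N n :: "real^3"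
  assumes "norm T = 1" "norm N = 1" "T \<bullet> N = 0"
    and "T \<bullet> n = 0" "N \<bullet> n = 0" "cross3 T N \<bullet> n = 0"
  shows "n = 0"
proof -
  have "cross3 (cross3 T N) n = (T \<bullet> n) *\<^sub>R N - (N \<bullet> n) *\<^sub>R T"
    by (simp add: cross3_simps forall_3)
  then have "cross3 (cross3 T N) n = 0"
    using assms by simp
  then have "(norm n)\<^sup>2 = 0"
    using norm_cross_dot[of "cross3 T N" n] norm_cross3_orthonormal[OF assms(1-3)] assms(6)
    by simp
  then show ?thesis by simp
qed

lemma orthonormal3_coordinates:
  fixes T N B :: "'a::real_inner"
  assumes "T \<bullet> T = 1" "N \<bullet> N = 1" "B \<bullet> B = 1" "T \<bullet> N = 0" "T \<bullet> B = 0" "N \<bullet> B = 0"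
  shows "(a *\<^sub>R T + b *\<^sub>R N + c *\<^sub>R B) \<bullet> T = a"
    and "(a *\<^sub>R T + b *\<^sub>R N + c *\<^sub>R B) \<bullet> N = b"
    and "(a *\<^sub>R T + b *\<^sub>R N + c *\<^sub>R B) \<bullet> B = c"
  using assms
  by (simp_all add: inner_add_left inner_commute[of N T] inner_commute[of B T] inner_commute[of B N])

locale frenet_frame =
  fixes I :: "real set" and \<alpha> T N B :: "real \<Rightarrow> real^3" and \<kappa> \<tau> :: "real \<Rightarrow> real"
  assumes frenet: "frenet_curve I \<alpha> T N B \<kappa> \<tau>"
begin

lemma open_domain: "open I"
  and interval_domain: "is_interval I"
  and domain_nonempty: "I \<noteq> {}"
  using frenet by (auto simp: frenet_curve_def)

lemma
  assumes "s \<in> I"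
  shows curve_deriv: "(\<alpha> has_vector_derivative T s) (at s)"
    and tangent_deriv: "(T has_vector_derivative (\<kappa> s *\<^sub>R N s)) (at s)"
    and normal_deriv: "(N has_vector_derivative (- \<kappa> s *\<^sub>R T s + \<tau> s *\<^sub>R B s)) (at s)"
    and binormal_deriv: "(B has_vector_derivative (- \<tau> s *\<^sub>R N s)) (at s)"
    and norm_tangent: "norm (T s) = 1"
    and norm_normal: "norm (N s) = 1"
    and tangent_normal_orthogonal: "T s \<bullet> N s = 0"
    and binormal_eq: "B s = cross3 (T s) (N s)"
    and curvature_pos: "\<kappa> s > 0"
  using frenet assms unfolding frenet_curve_def by blast+

lemma frame_coordinates:
  assumes "s \<in> I"
  shows "(a *\<^sub>R T s + b *\<^sub>R N s + c *\<^sub>R B s) \<bullet> T s = a"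
    and "(a *\<^sub>R T s + b *\<^sub>R N s + c *\<^sub>R B s) \<bullet> N s = b"
    and "(a *\<^sub>R T s + b *\<^sub>R N s + c *\<^sub>R B s) \<bullet> B s = c"
proof -
  have "norm (B s) = 1"
    using norm_cross3_orthonormal norm_tangent norm_normal tangent_normal_orthogonal
      binormal_eq assms by simp
  then have unit: "T s \<bullet> T s = 1" "N s \<bullet> N s = 1" "B s \<bullet> B s = 1"
    using norm_tangent[OF assms] norm_normal[OF assms] by (simp_all flip: power2_norm_eq_inner)
  have orth: "T s \<bullet> N s = 0" "T s \<bullet> B s = 0" "N s \<bullet> B s = 0"
    using tangent_normal_orthogonal[OF assms] binormal_eq[OF assms] dot_cross_self by auto
  show "(a *\<^sub>R T s + b *\<^sub>R N s + c *\<^sub>R B s) \<bullet> T s = a"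
    "(a *\<^sub>R T s + b *\<^sub>R N s + c *\<^sub>R B s) \<bullet> N s = b"
    "(a *\<^sub>R T s + b *\<^sub>R N s + c *\<^sub>R B s) \<bullet> B s = c"
    by (fact orthonormal3_coordinates[OF unit orth])+
qed

lemma frame_orthogonal_eq_zero:
  assumes "s \<in> I" "T s \<bullet> n = 0" "N s \<bullet> n = 0" "B s \<bullet> n = 0"
  shows "n = 0"
  using orthonormal_cross3_frame_orthogonal_eq_zero[OF norm_tangent[OF assms(1)]
      norm_normal[OF assms(1)] tangent_normal_orthogonal[OF assms(1)] assms(2,3)]
    assms(4) binormal_eq[OF assms(1)] by simp

lemma
  assumes "s \<in> I"
  shows inner_tangent_deriv: "((\<lambda>t. T t \<bullet> u) has_real_derivative \<kappa> s * (N s \<bullet> u)) (at s)"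
    and inner_normal_deriv:
      "((\<lambda>t. N t \<bullet> u) has_real_derivative - \<kappa> s * (T s \<bullet> u) + \<tau> s * (B s \<bullet> u)) (at s)"
    and inner_binormal_deriv: "((\<lambda>t. B t \<bullet> u) has_real_derivative - \<tau> s * (N s \<bullet> u)) (at s)"
  using has_real_derivative_inner_const[OF tangent_deriv[OF assms], of u]
    has_real_derivative_inner_const[OF normal_deriv[OF assms], of u]
    has_real_derivative_inner_const[OF binormal_deriv[OF assms], of u]
  by (simp_all add: inner_add_left inner_diff_left)

lemma tangent_const_angle_iff_normal_orthogonal:
  "(\<exists>c. \<forall>s\<in>I. T s \<bullet> u = c) \<longleftrightarrow> (\<forall>s\<in>I. N s \<bullet> u = 0)"
proof -
  have "\<kappa> s \<noteq> 0" if "s \<in> I" for s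
    using curvature_pos[OF that] by simp
  then show ?thesis
    using constant_on_interval_iff_derivative_factor_zero[OF open_domain interval_domain
        inner_tangent_deriv] by blast
qed

lemma binormal_const_angle_iff_normal_orthogonal:
  assumes "\<forall>s\<in>I. \<tau> s \<noteq> 0"
  shows "(\<exists>c. \<forall>s\<in>I. B s \<bullet> u = c) \<longleftrightarrow> (\<forall>s\<in>I. N s \<bullet> u = 0)"
  using constant_on_interval_iff_derivative_factor_zero[of I "\<lambda>t. B t \<bullet> u" "\<lambda>s. - \<tau> s"]
    open_domain interval_domain inner_binormal_deriv assms by simp

lemma general_helix_iff_binormal_const_angle:
  assumes "\<forall>s\<in>I. \<tau> s \<noteq> 0"
  shows "general_helix I T \<longleftrightarrow> const_angle_fixed_dir I B"
proof -
  have "(\<exists>c. \<forall>s\<in>I. T s \<bullet> u = c) \<longleftrightarrow> (\<exists>c. \<forall>s\<in>I. B s \<bullet> u = c)" for u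
    using tangent_const_angle_iff_normal_orthogonal
      binormal_const_angle_iff_normal_orthogonal[OF assms] by simp
  then show ?thesis
    unfolding general_helix_def const_angle_fixed_dir_def by (metis (no_types))
qed

lemma normal_orthogonal_imp_torsion_binormal_eq:
  assumes "\<forall>s\<in>I. N s \<bullet> n = 0" "s \<in> I"
  shows "\<tau> s * (B s \<bullet> n) = \<kappa> s * (T s \<bullet> n)"
  using has_real_derivative_zero_if_constant_on_open[OF open_domain assms(2)
      inner_normal_deriv[OF assms(2)] assms(1)] by simp

lemma binormal_orthogonal_eq_zero:
  assumes "\<forall>s\<in>I. \<tau> s \<noteq> 0" "\<forall>s\<in>I. B s \<bullet> n = 0"
  shows "n = 0"
proof -
  have normal: "\<forall>s\<in>I. N s \<bullet> n = 0"
    using binormal_const_angle_iff_normal_orthogonal[OF assms(1)] assms(2) by blast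
  obtain s where s: "s \<in> I"
    using domain_nonempty by blast
  have "\<kappa> s * (T s \<bullet> n) = 0"
    using normal_orthogonal_imp_torsion_binormal_eq[OF normal s] assms(2) s by simp
  then have "T s \<bullet> n = 0"
    using curvature_pos[OF s] by simp
  then show ?thesis
    using frame_orthogonal_eq_zero[OF s] normal assms(2) s by blast
qed

lemma plane_curve_imp_osculating_plane_orthogonal:
  assumes "plane_curve I \<alpha>"
  obtains n where "n \<noteq> 0" "\<forall>s\<in>I. T s \<bullet> n = 0" "\<forall>s\<in>I. N s \<bullet> n = 0"
proof -
  obtain p n where "n \<noteq> 0" and plane: "\<forall>s\<in>I. (\<alpha> s - p) \<bullet> n = 0"
    using assms unfolding plane_curve_def by blast
  have deriv: "((\<lambda>t. (\<alpha> t - p) \<bullet> n) has_real_derivative 1 * (T s \<bullet> n)) (at s)"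
    if "s \<in> I" for s
    using has_real_derivative_inner_const[OF has_vector_derivative_diff[OF curve_deriv[OF that]
        has_vector_derivative_const[of p]], of n] by simp
  have "(\<exists>c. \<forall>s\<in>I. (\<alpha> s - p) \<bullet> n = c) \<longleftrightarrow> (\<forall>s\<in>I. T s \<bullet> n = 0)"
    using constant_on_interval_iff_derivative_factor_zero[OF open_domain interval_domain deriv]
    by simp
  then have tangent: "\<forall>s\<in>I. T s \<bullet> n = 0"
    using plane by blast
  then have "\<forall>s\<in>I. N s \<bullet> n = 0"
    using tangent_const_angle_iff_normal_orthogonal by blast
  with \<open>n \<noteq> 0\<close> tangent that show ?thesis by blast
qed

lemma not_plane_curve:
  assumes "\<forall>s\<in>I. \<tau> s \<noteq> 0"
  shows "\<not> plane_curve I \<alpha>"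
proof
  assume "plane_curve I \<alpha>"
  then obtain n where "n \<noteq> 0" and tangent: "\<forall>s\<in>I. T s \<bullet> n = 0"
    and normal: "\<forall>s\<in>I. N s \<bullet> n = 0"
    by (rule plane_curve_imp_osculating_plane_orthogonal)
  have "\<tau> s * (B s \<bullet> n) = 0" if "s \<in> I" for s
    using normal_orthogonal_imp_torsion_binormal_eq[OF normal that] tangent that by simp
  then have "\<forall>s\<in>I. B s \<bullet> n = 0"
    using assms by simp
  with \<open>n \<noteq> 0\<close> show False
    using binormal_orthogonal_eq_zero assms by blast
qed

end

locale osculating_mate =
  alpha: frenet_frame I \<alpha> T N B \<kappa> \<tau> + beta: frenet_frame I \<beta> Tb Nb Bb \<kappa>b \<tau>b
  for I \<alpha> T N B \<kappa> \<tau> \<beta> Tb Nb Bb \<kappa>b \<tau>b +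
  fixes x1 x2 :: "real \<Rightarrow> real"
  assumes coefficients_differentiable:
      "\<forall>s\<in>I. x1 differentiable (at s) \<and> x2 differentiable (at s)"
    and mate_deriv: "\<forall>s\<in>I. (\<beta> has_vector_derivative (x1 s *\<^sub>R T s + x2 s *\<^sub>R N s)) (at s)"
    and mate_second_deriv_orthogonal: "\<forall>s\<in>I. \<forall>v\<in>span {T s, N s}.
      inner (vector_derivative (\<lambda>t. vector_derivative \<beta> (at t)) (at s)) v = 0"
begin

lemma mate_tangent: "s \<in> I \<Longrightarrow> Tb s = x1 s *\<^sub>R T s + x2 s *\<^sub>R N s"
  using vector_derivative_unique_at[OF beta.curve_deriv] mate_deriv by blast

lemma mate_normal_orthogonal:
  assumes s: "s \<in> I"
  shows "Nb s \<bullet> T s = 0" "Nb s \<bullet> N s = 0"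
proof -
  have "((\<lambda>t. vector_derivative \<beta> (at t)) has_vector_derivative \<kappa>b s *\<^sub>R Nb s) (at s)"
    by (rule has_vector_derivative_transform_within_open[OF beta.tangent_deriv[OF s]
          beta.open_domain s])
       (use beta.curve_deriv vector_derivative_at in metis)
  then have "vector_derivative (\<lambda>t. vector_derivative \<beta> (at t)) (at s) = \<kappa>b s *\<^sub>R Nb s"
    by (rule vector_derivative_at)
  moreover have "T s \<in> span {T s, N s}" "N s \<in> span {T s, N s}"
    by (auto intro: span_base)
  ultimately have "(\<kappa>b s *\<^sub>R Nb s) \<bullet> T s = 0" "(\<kappa>b s *\<^sub>R Nb s) \<bullet> N s = 0"
    using mate_second_deriv_orthogonal s by metis+
  then show "Nb s \<bullet> T s = 0" "Nb s \<bullet> N s = 0"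
    using beta.curvature_pos[OF s] by simp_all
qed

lemma mate_tangent_deriv:
  assumes s: "s \<in> I"
    and "(x1 has_real_derivative d1) (at s)" "(x2 has_real_derivative d2) (at s)"
  shows "(Tb has_vector_derivative
      (d1 - \<kappa> s * x2 s) *\<^sub>R T s + (d2 + \<kappa> s * x1 s) *\<^sub>R N s + (x2 s * \<tau> s) *\<^sub>R B s) (at s)"
proof -
  have expand: "(x1 s *\<^sub>R (\<kappa> s *\<^sub>R N s) + d1 *\<^sub>R T s) +
      (x2 s *\<^sub>R (- \<kappa> s *\<^sub>R T s + \<tau> s *\<^sub>R B s) + d2 *\<^sub>R N s) =
      (d1 - \<kappa> s * x2 s) *\<^sub>R T s + (d2 + \<kappa> s * x1 s) *\<^sub>R N s + (x2 s * \<tau> s) *\<^sub>R B s"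
    by (simp add: algebra_simps)
  have "((\<lambda>t. x1 t *\<^sub>R T t + x2 t *\<^sub>R N t) has_vector_derivative
      (x1 s *\<^sub>R (\<kappa> s *\<^sub>R N s) + d1 *\<^sub>R T s) +
      (x2 s *\<^sub>R (- \<kappa> s *\<^sub>R T s + \<tau> s *\<^sub>R B s) + d2 *\<^sub>R N s)) (at s)"
    by (intro has_vector_derivative_add has_vector_derivative_scaleR assms
        alpha.tangent_deriv alpha.normal_deriv)
  then have "((\<lambda>t. x1 t *\<^sub>R T t + x2 t *\<^sub>R N t) has_vector_derivative
      (d1 - \<kappa> s * x2 s) *\<^sub>R T s + (d2 + \<kappa> s * x1 s) *\<^sub>R N s + (x2 s * \<tau> s) *\<^sub>R B s) (at s)"
    unfolding expand .
  then show ?thesis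
    by (rule has_vector_derivative_transform_within_open[OF _ beta.open_domain s])
       (simp add: mate_tangent)
qed

lemma mate_curvature_normal:
  assumes s: "s \<in> I"
  shows "\<kappa>b s *\<^sub>R Nb s = (x2 s * \<tau> s) *\<^sub>R B s"
proof -
  obtain d1 d2 where d: "(x1 has_real_derivative d1) (at s)" "(x2 has_real_derivative d2) (at s)"
    using coefficients_differentiable s DERIV_deriv_iff_real_differentiable by blast
  define a b where "a = d1 - \<kappa> s * x2 s" and "b = d2 + \<kappa> s * x1 s"
  have eq: "\<kappa>b s *\<^sub>R Nb s = a *\<^sub>R T s + b *\<^sub>R N s + (x2 s * \<tau> s) *\<^sub>R B s"
    using vector_derivative_unique_at[OF beta.tangent_deriv[OF s] mate_tangent_deriv[OF s d]]
    unfolding a_def b_def .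
  have "a = (\<kappa>b s *\<^sub>R Nb s) \<bullet> T s" "b = (\<kappa>b s *\<^sub>R Nb s) \<bullet> N s"
    unfolding eq by (rule alpha.frame_coordinates[OF s, symmetric])+
  then have "a = 0" "b = 0"
    using mate_normal_orthogonal[OF s] by simp_all
  with eq show ?thesis by simp
qed

lemma torsion_nonzero: "s \<in> I \<Longrightarrow> \<tau> s \<noteq> 0"
proof
  assume s: "s \<in> I" and "\<tau> s = 0"
  then have "\<kappa>b s *\<^sub>R Nb s = 0"
    using mate_curvature_normal[OF s] by simp
  then show False
    using beta.curvature_pos[OF s] beta.norm_normal[OF s] by auto
qed

lemma mate_normal_eq_signed_binormal: "\<exists>e. \<bar>e\<bar> = 1 \<and> (\<forall>s\<in>I. Nb s = e *\<^sub>R B s)"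
proof -
  have pointwise: "Nb s = (Nb s \<bullet> B s) *\<^sub>R B s \<and> \<bar>Nb s \<bullet> B s\<bar> = 1" if s: "s \<in> I" for s
  proof -
    define c where "c = x2 s * \<tau> s / \<kappa>b s"
    have "Nb s = inverse (\<kappa>b s) *\<^sub>R (\<kappa>b s *\<^sub>R Nb s)"
      using beta.curvature_pos[OF s] by simp
    also have "\<dots> = c *\<^sub>R B s"
      unfolding mate_curvature_normal[OF s] c_def by (simp add: divide_inverse mult.commute)
    finally have nb: "Nb s = c *\<^sub>R B s" .
    have "B s \<bullet> B s = 1"
      using alpha.frame_coordinates(3)[OF s, of 0 0 1] by simp
    then have "Nb s \<bullet> B s = c" "c\<^sup>2 = 1"
      using beta.norm_normal[OF s] unfolding nb norm_eq_1 by (simp_all add: power2_eq_square)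
    then show ?thesis
      using nb by (simp only: abs_square_eq_1 simp_thms)
  qed
  have "continuous_on I (\<lambda>s. Nb s \<bullet> B s)"
    by (intro continuous_at_imp_continuous_on ballI continuous_inner
        has_vector_derivative_continuous[OF beta.normal_deriv]
        has_vector_derivative_continuous[OF alpha.binormal_deriv])
  then obtain e where "\<bar>e\<bar> = 1" "\<And>s. s \<in> I \<Longrightarrow> Nb s \<bullet> B s = e"
    using continuous_on_unit_valued_constant[OF is_interval_connected[OF alpha.interval_domain]
        alpha.domain_nonempty] pointwise by blast
  with pointwise show ?thesis by auto
qed

lemma mate_not_plane_curve: "\<not> plane_curve I \<beta>"
proof
  assume "plane_curve I \<beta>"
  then obtain n where "n \<noteq> 0" "\<forall>s\<in>I. Tb s \<bullet> n = 0" "\<forall>s\<in>I. Nb s \<bullet> n = 0"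
    by (rule beta.plane_curve_imp_osculating_plane_orthogonal)
  moreover obtain e where "\<bar>e\<bar> = 1" "\<forall>s\<in>I. Nb s = e *\<^sub>R B s"
    using mate_normal_eq_signed_binormal by blast
  ultimately have "\<forall>s\<in>I. B s \<bullet> n = 0"
    by auto
  then show False
    using alpha.binormal_orthogonal_eq_zero torsion_nonzero \<open>n \<noteq> 0\<close> by blast
qed

lemma general_helix_iff_mate_slant_helix: "general_helix I T \<longleftrightarrow> slant_helix I Nb"
proof -
  obtain e where "\<bar>e\<bar> = 1" "\<forall>s\<in>I. Nb s = e *\<^sub>R B s"
    using mate_normal_eq_signed_binormal by blast
  then have "slant_helix I Nb \<longleftrightarrow> const_angle_fixed_dir I B"
    unfolding slant_helix_def by (intro const_angle_fixed_dir_scaleR[of e]) auto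
  then show ?thesis
    using alpha.general_helix_iff_binormal_const_angle torsion_nonzero by simp
qed

end

theorem corollary5:
  fixes I :: "real set"
    and \<alpha> T N B \<beta> Tb Nb Bb :: "real \<Rightarrow> real^3"
    and \<kappa> \<tau> \<kappa>b \<tau>b x1 x2 :: "real \<Rightarrow> real"
  assumes alpha: "frenet_curve I \<alpha> T N B \<kappa> \<tau>"
    and beta: "frenet_curve I \<beta> Tb Nb Bb \<kappa>b \<tau>b"
    and x_diff: "\<forall>s\<in>I. x1 differentiable (at s) \<and> x2 differentiable (at s)"
    and x_unit: "\<forall>s\<in>I. (x1 s)\<^sup>2 + (x2 s)\<^sup>2 = 1"
    and beta_deriv: "\<forall>s\<in>I. (\<beta> has_vector_derivative (x1 s *\<^sub>R T s + x2 s *\<^sub>R N s)) (at s)"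
    and osc: "\<forall>s\<in>I. \<forall>v\<in>span {T s, N s}.
                inner (vector_derivative (\<lambda>t. vector_derivative \<beta> (at t)) (at s)) v = 0"
  shows "(plane_curve I \<alpha> \<longleftrightarrow> plane_curve I \<beta>) \<and>
         (general_helix I T \<longleftrightarrow> slant_helix I Nb)"
proof -
  interpret osculating_mate I \<alpha> T N B \<kappa> \<tau> \<beta> Tb Nb Bb \<kappa>b \<tau>b x1 x2
    using alpha beta x_diff beta_deriv osc
    by (simp add: osculating_mate_def osculating_mate_axioms_def frenet_frame_def)
  have "\<not> plane_curve I \<alpha>"
    using alpha.not_plane_curve torsion_nonzero by blast
  then show ?thesis
    using mate_not_plane_curve general_helix_iff_mate_slant_helix by blast
qed

end
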